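(* Let $C^*,C_1,C_2>0$. Let $\underline{\boldsymbol m}_h^{(1)},\underline{\boldsymbol m}_h^{(2)}\in\boldsymbol X$ with $|\underline{\boldsymbol m}_h^{(q)}|=1$ pointwise and $\|\underline{\boldsymbol m}_h^{(q)}\|_\infty+\|\nabla_h\underline{\boldsymbol m}_h^{(q)}\|_\infty\le C^*$, $q=1,2$. Let $\tilde{\boldsymbol m}_h^{(1)},\tilde{\boldsymbol m}_h^{(2)}\in\boldsymbol X$, set $\boldsymbol m_h^{(q)}=\tilde{\boldsymbol m}_h^{(q)}/|\tilde{\boldsymbol m}_h^{(q)}|$, $\boldsymbol e_h^{(q)}=\underline{\boldsymbol m}_h^{(q)}-\boldsymbol m_h^{(q)}$, $\tilde{\boldsymbol e}_h^{(q)}=\underline{\boldsymbol m}_h^{(q)}-\tilde{\boldsymbol m}_h^{(q)}$. Suppose $C_1h\le k\le C_2h$, $$\|\tilde{\boldsymbol e}_h^{(q)}\|_2\le2k^{15/8},\quad\|\nabla_h\tilde{\boldsymbol e}_h^{(q)}\|_2\le\tfrac12k^{11/8}\ (q=1,2),\qquad\|\underline{\boldsymbol m}_h^{(1)}-\underline{\boldsymbol m}_h^{(2)}\|_\infty\le\tfrac14k^{7/8}.$$ Then, for $k$ and $h$ sufficiently small, $$\big|\langle\tilde{\boldsymbol e}_h^{(1)}-\boldsymbol e_h^{(1)},\boldsymbol e_h^{(2)}\rangle\big|\le k^{5/4}\|\boldsymbol e_h^{(2)}\|_2^2+k^{1/4}\|\tilde{\boldsymbol e}_h^{(1)}-\boldsymbol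 e_h^{(1)}\|_2^2.$$
   Context: $\Omega=[0,1]^3$, $h=1/N$, cell-centered grid points $((i-\tfrac12)h,(j-\tfrac12)h,(\ell-\tfrac12)h)$, $0\le i,j,\ell\le N+1$, interior points $\Omega_h^0$ those with $1\le i,j,\ell\le N$. $\boldsymbol X$ is the space of $\mathbb R^3$-valued grid functions satisfying the discrete Neumann condition $\boldsymbol m_{0,j,\ell}=\boldsymbol m_{1,j,\ell}$, $\boldsymbol m_{N+1,j,\ell}=\boldsymbol m_{N,j,\ell}$ (and analogously in $j,\ell$). Forward differences $D_xf_{i,j,\ell}=(f_{i+1,j,\ell}-f_{i,j,\ell})/h$ (similarly $D_y,D_z$); $\nabla_h$ collects all forward differences. $\langle\boldsymbol f,\boldsymbol g\rangle=h^3\sum_{\Omega_h^0}\boldsymbol f\cdot\boldsymbol g$, $\|\boldsymbol f\|_2=\langle\boldsymbol f,\boldsymbol f\rangle^{1/2}$, $\|\boldsymbol f\|_\infty=\max_{\Omega_h^0}|\boldsymbol f|$, and $\|\nabla_h\boldsymbol f\|_2,\|\nabla_h\boldsymbol f\|_\infty$ are the analogous discrete norms of the difference quotients. *)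

theory Defs
  imports "HOL-Analysis.Analysis"
begin

text \<open>Grid functions on the cell-centred grid: indices (i,j,l) with 0 \<le> i,j,l \<le> N+1,
  values in R^3. Values at indices beyond N+1 are irrelevant.\<close>
type_synonym gridfun = "nat \<Rightarrow> nat \<Rightarrow> nat \<Rightarrow> real^3"

definition interior :: "nat \<Rightarrow> (nat \<times> nat \<times> nat) set" where
  "interior N = {1..N} \<times> {1..N} \<times> {1..N}"

definition allpts :: "nat \<Rightarrow> (nat \<times> nat \<times> nat) set" where
  "allpts N = {0..N+1} \<times> {0..N+1} \<times> {0..N+1}"

definition inX :: "nat \<Rightarrow> gridfun \<Rightarrow> bool" where
  "inX N m \<longleftrightarrow>
     (\<forall>j\<le>N+1. \<forall>l\<le>N+1. m 0 j l = m 1 j l \<and> m (N+1) j l = m N j l) \<and>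
     (\<forall>i\<le>N+1. \<forall>l\<le>N+1. m i 0 l = m i 1 l \<and> m i (N+1) l = m i N l) \<and>
     (\<forall>i\<le>N+1. \<forall>j\<le>N+1. m i j 0 = m i j 1 \<and> m i j (N+1) = m i j N)"

definition meshsize :: "nat \<Rightarrow> real" where
  "meshsize N = 1 / real N"

definition Dx :: "nat \<Rightarrow> gridfun \<Rightarrow> gridfun" where
  "Dx N f i j l = (f (i+1) j l - f i j l) /\<^sub>R meshsize N"
definition Dy :: "nat \<Rightarrow> gridfun \<Rightarrow> gridfun" where
  "Dy N f i j l = (f i (j+1) l - f i j l) /\<^sub>R meshsize N"
definition Dz :: "nat \<Rightarrow> gridfun \<Rightarrow> gridfun" where
  "Dz N f i j l = (f i j (l+1) - f i j l) /\<^sub>R meshsize N"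

definition ginner :: "nat \<Rightarrow> gridfun \<Rightarrow> gridfun \<Rightarrow> real" where
  "ginner N f g = (meshsize N)^3 * (\<Sum>(i,j,l)\<in>interior N. f i j l \<bullet> g i j l)"

definition norm2 :: "nat \<Rightarrow> gridfun \<Rightarrow> real" where
  "norm2 N f = sqrt (ginner N f f)"

definition gradnorm2 :: "nat \<Rightarrow> gridfun \<Rightarrow> real" where
  "gradnorm2 N f = sqrt ((meshsize N)^3 * (\<Sum>(i,j,l)\<in>interior N.
      (norm (Dx N f i j l))^2 + (norm (Dy N f i j l))^2 + (norm (Dz N f i j l))^2))"

definition norminf :: "nat \<Rightarrow> gridfun \<Rightarrow> real" where
  "norminf N f = Max ((\<lambda>(i,j,l). norm (f i j l)) ` interior N)"

definition gradnorminf :: "nat \<Rightarrow> gridfun \<Rightarrow> real" where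
  "gradnorminf N f = Max ((\<lambda>(i,j,l). sqrt ((norm (Dx N f i j l))^2
      + (norm (Dy N f i j l))^2 + (norm (Dz N f i j l))^2)) ` interior N)"

definition normalize :: "gridfun \<Rightarrow> gridfun" where
  "normalize m i j l = m i j l /\<^sub>R norm (m i j l)"

end

theory Submission
  imports Defs
begin

text \<open>
  Write m = mt / |mt| for the normalized approximations. Pointwise, the normalization error
  m1 - mt1 is parallel to the unit vector m1, whereas e2 = mu2 - m2 is a difference of unit
  vectors, so that m2 \<bullet> e2 = -|e2|^2/2. As m1 and m2 are close, |(m1 - mt1) \<bullet> e2| is at
  most K |m1 - mt1| |e2| with K of the order of |mu - mt| + |mu1 - mu2|. Once K \<le> 2 k^(3/4),
  Young's inequality with the weights k^(1/4) and k^(5/4) gives the claim pointwise, and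
  summation gives it for the discrete inner product.

  The pointwise bound |mu - mt| \<le> k^(3/4)/5 comes from a discrete Sobolev-type inequality:
  comparing a grid value with its means over nested boxes of sides m^2 and m^6, where
  m \<approx> k^(-1/16), bounds it by O(m h^(-1/2) \<parallel>\<nabla>_h f\<parallel>_2 + h^(-3/2) m^(-9) \<parallel>f\<parallel>_2),
  which is O(k^(13/16)) under the hypotheses.
\<close>

lemma norm_diff_le_sum_steps:
  fixes g :: "nat \<Rightarrow> 'a::real_normed_vector"
  assumes "x \<le> y"
  shows "norm (g y - g x) \<le> (\<Sum>t\<in>{x..<y}. norm (g (t+1) - g t))"
  using assms
proof (induction y rule: dec_induct)
  case base
  then show ?case by simp
next
  case (step n)
  have "norm (g (Suc n) - g x) \<le> norm (g (Suc n) - g n) + norm (g n - g x)"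
    using norm_triangle_ineq[of "g (Suc n) - g n" "g n - g x"] by simp
  also have "\<dots> \<le> norm (g (Suc n) - g n) + (\<Sum>t\<in>{x..<n}. norm (g (t+1) - g t))"
    using step by simp
  finally show ?case
    using step by (simp add: sum.atLeastLessThan_Suc add.commute)
qed

lemma norm_diff_le_sum_steps_interval:
  fixes g :: "nat \<Rightarrow> 'a::real_normed_vector"
  assumes "x \<in> {b..<b+S}" "y \<in> {b..<b+S}"
  shows "norm (g x - g y) \<le> (\<Sum>t\<in>{b..<b+S}. norm (g (t+1) - g t))"
proof -
  have ordered: "norm (g v - g u) \<le> (\<Sum>t\<in>{b..<b+S}. norm (g (t+1) - g t))"
    if "u \<le> v" "u \<in> {b..<b+S}" "v \<in> {b..<b+S}" for u v
  proof -
    have "norm (g v - g u) \<le> (\<Sum>t\<in>{u..<v}. norm (g (t+1) - g t))"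
      using norm_diff_le_sum_steps that(1) .
    also have "\<dots> \<le> (\<Sum>t\<in>{b..<b+S}. norm (g (t+1) - g t))"
      by (rule sum_mono2) (use that in auto)
    finally show ?thesis .
  qed
  show ?thesis
    using assms ordered[of x y] ordered[of y x]
    by (cases "x \<le> y") (simp_all add: norm_minus_commute)
qed

lemma norm_diff_le_axis_steps:
  fixes f :: "nat \<Rightarrow> nat \<Rightarrow> nat \<Rightarrow> 'a::real_normed_vector"
  assumes "x1 \<in> I1" "y1 \<in> I1" "x2 \<in> I2" "y2 \<in> I2" "x3 \<in> I3" "y3 \<in> I3"
    and "I1 = {b1..<b1+S}" "I2 = {b2..<b2+S}" "I3 = {b3..<b3+S}"
  shows "norm (f x1 x2 x3 - f y1 y2 y3) \<le>
     (\<Sum>t\<in>I1. norm (f (t+1) y2 y3 - f t y2 y3)) +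
     (\<Sum>t\<in>I2. norm (f x1 (t+1) y3 - f x1 t y3)) +
     (\<Sum>t\<in>I3. norm (f x1 x2 (t+1) - f x1 x2 t))"
proof -
  have "norm (f x1 x2 x3 - f y1 y2 y3) \<le> norm (f x1 x2 x3 - f x1 x2 y3)
      + norm (f x1 x2 y3 - f x1 y2 y3) + norm (f x1 y2 y3 - f y1 y2 y3)"
    using norm_triangle_ineq[of "f x1 x2 x3 - f x1 x2 y3" "f x1 x2 y3 - f x1 y2 y3"]
          norm_triangle_ineq[of "f x1 x2 x3 - f x1 y2 y3" "f x1 y2 y3 - f y1 y2 y3"]
    by simp
  moreover have "norm (f x1 y2 y3 - f y1 y2 y3) \<le> (\<Sum>t\<in>I1. norm (f (t+1) y2 y3 - f t y2 y3))"
    using norm_diff_le_sum_steps_interval[of x1 b1 S y1 "\<lambda>t. f t y2 y3"] assms by simp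
  moreover have "norm (f x1 x2 y3 - f x1 y2 y3) \<le> (\<Sum>t\<in>I2. norm (f x1 (t+1) y3 - f x1 t y3))"
    using norm_diff_le_sum_steps_interval[of x2 b2 S y2 "\<lambda>t. f x1 t y3"] assms by simp
  moreover have "norm (f x1 x2 x3 - f x1 x2 y3) \<le> (\<Sum>t\<in>I3. norm (f x1 x2 (t+1) - f x1 x2 t))"
    using norm_diff_le_sum_steps_interval[of x3 b3 S y3 "\<lambda>t. f x1 x2 t"] assms by simp
  ultimately show ?thesis by linarith
qed

lemma sum_le_sqrt_card_mult_sqrt_sum_squares:
  fixes g :: "'a \<Rightarrow> real"
  assumes "finite Q" "P \<subseteq> Q" "\<And>p. p \<in> Q \<Longrightarrow> g p \<ge> 0"
  shows "(\<Sum>p\<in>P. g p) \<le> sqrt (card P) * sqrt (\<Sum>p\<in>Q. (g p)^2)"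
proof -
  have "(\<Sum>p\<in>P. g p)^2 \<le> (\<Sum>p\<in>P. (g p)^2) * card P"
    by (rule sum_squared_le_sum_of_squares)
  also have "\<dots> \<le> (\<Sum>p\<in>Q. (g p)^2) * card P"
    by (intro mult_right_mono sum_mono2) (use assms in auto)
  finally have "(\<Sum>p\<in>P. g p) \<le> sqrt ((\<Sum>p\<in>Q. (g p)^2) * card P)"
    by (simp add: real_le_rsqrt)
  then show ?thesis
    by (simp add: real_sqrt_mult mult.commute)
qed

lemma sum_cartesian_product3:
  "(\<Sum>(i,j,l)\<in>A \<times> B \<times> C. g i j l) = (\<Sum>i\<in>A. \<Sum>j\<in>B. \<Sum>l\<in>C. g i j l)"
  by (simp add: sum.cartesian_product case_prod_beta)

lemma norm_mean_diff_le:
  fixes F :: "'a \<Rightarrow> 'b::real_normed_vector"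
  assumes "finite A" "finite B" "A \<noteq> {}" "B \<noteq> {}"
  shows "norm (sum F A /\<^sub>R real (card A) - sum F B /\<^sub>R real (card B))
     \<le> (\<Sum>a\<in>A. \<Sum>b\<in>B. norm (F a - F b)) / (real (card A) * real (card B))"
proof -
  have cA: "real (card A) > 0" and cB: "real (card B) > 0"
    using assms by auto
  have pairs: "(\<Sum>a\<in>A. \<Sum>b\<in>B. F a - F b) = real (card B) *\<^sub>R sum F A - real (card A) *\<^sub>R sum F B"
    by (simp only: sum_subtractf scaleR_sum_right sum_constant_scaleR)
  have "sum F A /\<^sub>R real (card A) - sum F B /\<^sub>R real (card B)
      = (\<Sum>a\<in>A. \<Sum>b\<in>B. F a - F b) /\<^sub>R (real (card A) * real (card B))"
    unfolding pairs using cA cB by (simp add: scaleR_diff_right field_simps)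
  also have "norm \<dots> \<le> (\<Sum>a\<in>A. \<Sum>b\<in>B. norm (F a - F b)) / (real (card A) * real (card B))"
  proof -
    have "norm (\<Sum>a\<in>A. \<Sum>b\<in>B. F a - F b) \<le> (\<Sum>a\<in>A. \<Sum>b\<in>B. norm (F a - F b))"
      by (rule order_trans[OF norm_sum sum_mono[OF norm_sum]])
    then show ?thesis
      using cA cB by (simp add: divide_right_mono divide_inverse mult.commute)
  qed
  finally show ?thesis .
qed

section \<open>A discrete Sobolev inequality\<close>

lemma ginner_self: "ginner N f f = (1 / real N)^3 * (\<Sum>(i,j,l)\<in>interior N. (norm (f i j l))^2)"
  unfolding ginner_def meshsize_def by (simp add: power2_norm_eq_inner case_prod_beta)

lemma ginner_self_nonneg: "ginner N f f \<ge> 0"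
  unfolding ginner_self by (auto intro!: sum_nonneg mult_nonneg_nonneg simp: case_prod_beta)

lemma norm2_nonneg: "norm2 N f \<ge> 0"
  unfolding norm2_def using ginner_self_nonneg by simp

lemma norm2_squared: "(norm2 N f)^2 = ginner N f f"
  unfolding norm2_def using ginner_self_nonneg by simp

lemma gradnorm2_nonneg: "gradnorm2 N f \<ge> 0"
  unfolding gradnorm2_def meshsize_def
  by (auto intro!: sum_nonneg mult_nonneg_nonneg simp: case_prod_beta)

lemma le_norminf:
  assumes "(i,j,l) \<in> interior N"
  shows "norm (f i j l) \<le> norminf N f"
  unfolding norminf_def by (rule Max_ge) (use assms in \<open>force simp: interior_def\<close>)+

definition diff_energy :: "nat \<Rightarrow> gridfun \<Rightarrow> real" where
  "diff_energy N f = (\<Sum>(i,j,l)\<in>interior N. (norm (f (i+1) j l - f i j l))^2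
      + (norm (f i (j+1) l - f i j l))^2 + (norm (f i j (l+1) - f i j l))^2)"

definition grid_mean :: "(nat \<times> nat \<times> nat) set \<Rightarrow> gridfun \<Rightarrow> real^3" where
  "grid_mean A f = (\<Sum>(i,j,l)\<in>A. f i j l) /\<^sub>R real (card A)"

lemma diff_energy_nonneg: "diff_energy N f \<ge> 0"
  unfolding diff_energy_def by (auto intro!: sum_nonneg)

lemma sum_box_le_sqrt_card_mult:
  fixes g :: "nat \<Rightarrow> nat \<Rightarrow> nat \<Rightarrow> real"
  assumes "A \<times> B \<times> C \<subseteq> interior N" "\<And>i j l. g i j l \<ge> 0"
  shows "(\<Sum>i\<in>A. \<Sum>j\<in>B. \<Sum>l\<in>C. g i j l)
    \<le> sqrt (card A * card B * card C) * sqrt (\<Sum>(i,j,l)\<in>interior N. (g i j l)^2)"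
proof -
  have "(\<Sum>i\<in>A. \<Sum>j\<in>B. \<Sum>l\<in>C. g i j l) = (\<Sum>p\<in>A \<times> B \<times> C. (\<lambda>(i,j,l). g i j l) p)"
    by (simp add: sum_cartesian_product3)
  also have "\<dots> \<le> sqrt (card (A \<times> B \<times> C)) * sqrt (\<Sum>p\<in>interior N. ((\<lambda>(i,j,l). g i j l) p)^2)"
    by (rule sum_le_sqrt_card_mult_sqrt_sum_squares) (use assms in \<open>auto simp: interior_def\<close>)
  finally show ?thesis
    by (simp add: card_cartesian_product case_prod_beta mult.assoc)
qed

lemma sum_box_steps_le_sqrt_diff_energy:
  fixes f :: gridfun
  assumes "A \<times> B \<times> C \<subseteq> interior N"
  shows "(\<Sum>i\<in>A. \<Sum>j\<in>B. \<Sum>l\<in>C. norm (f (i+1) j l - f i j l))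
      \<le> sqrt (card A * card B * card C) * sqrt (diff_energy N f)"
    "(\<Sum>i\<in>A. \<Sum>j\<in>B. \<Sum>l\<in>C. norm (f i (j+1) l - f i j l))
      \<le> sqrt (card A * card B * card C) * sqrt (diff_energy N f)"
    "(\<Sum>i\<in>A. \<Sum>j\<in>B. \<Sum>l\<in>C. norm (f i j (l+1) - f i j l))
      \<le> sqrt (card A * card B * card C) * sqrt (diff_energy N f)"
  by (rule order_trans[OF sum_box_le_sqrt_card_mult[OF assms] mult_left_mono];
      auto simp: diff_energy_def intro!: sum_mono)+

lemma sum_pairs_norm_diff_le_axis_sums:
  fixes f :: gridfun
  assumes I: "I1 = {b1..<b1+S}" "I2 = {b2..<b2+S}" "I3 = {b3..<b3+S}"
    and J: "J1 \<subseteq> I1" "J2 \<subseteq> I2" "J3 \<subseteq> I3" "card J1 = s" "card J2 = s" "card J3 = s"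
  shows "(\<Sum>(x1,x2,x3)\<in>J1\<times>J2\<times>J3. \<Sum>(y1,y2,y3)\<in>I1\<times>I2\<times>I3. norm (f x1 x2 x3 - f y1 y2 y3))
    \<le> real (s * s * s * S) * (\<Sum>t\<in>I1. \<Sum>y2\<in>I2. \<Sum>y3\<in>I3. norm (f (t+1) y2 y3 - f t y2 y3))
      + real (s * s * S * S) * (\<Sum>x1\<in>J1. \<Sum>t\<in>I2. \<Sum>y3\<in>I3. norm (f x1 (t+1) y3 - f x1 t y3))
      + real (s * S * S * S) * (\<Sum>x1\<in>J1. \<Sum>x2\<in>J2. \<Sum>t\<in>I3. norm (f x1 x2 (t+1) - f x1 x2 t))"
proof -
  define P where "P y2 y3 = (\<Sum>t\<in>I1. norm (f (t+1) y2 y3 - f t y2 y3))" for y2 y3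
  define Q where "Q x1 y3 = (\<Sum>t\<in>I2. norm (f x1 (t+1) y3 - f x1 t y3))" for x1 y3
  define R where "R x1 x2 = (\<Sum>t\<in>I3. norm (f x1 x2 (t+1) - f x1 x2 t))" for x1 x2
  have cI: "card I1 = S" "card I2 = S" "card I3 = S"
    using I by simp_all
  have "(\<Sum>(x1,x2,x3)\<in>J1\<times>J2\<times>J3. \<Sum>(y1,y2,y3)\<in>I1\<times>I2\<times>I3. norm (f x1 x2 x3 - f y1 y2 y3))
      = (\<Sum>x1\<in>J1. \<Sum>x2\<in>J2. \<Sum>x3\<in>J3. \<Sum>y1\<in>I1. \<Sum>y2\<in>I2. \<Sum>y3\<in>I3. norm (f x1 x2 x3 - f y1 y2 y3))"
    by (simp only: sum_cartesian_product3)
  also have "\<dots> \<le> (\<Sum>x1\<in>J1. \<Sum>x2\<in>J2. \<Sum>x3\<in>J3. \<Sum>y1\<in>I1. \<Sum>y2\<in>I2. \<Sum>y3\<in>I3.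
      P y2 y3 + Q x1 y3 + R x1 x2)"
    unfolding P_def Q_def R_def
    by (intro sum_mono norm_diff_le_axis_steps[OF _ _ _ _ _ _ I]) (use J in auto)
  also have "\<dots> = real (s * s * s * S) * (\<Sum>y2\<in>I2. \<Sum>y3\<in>I3. P y2 y3)
      + real (s * s * S * S) * (\<Sum>x1\<in>J1. \<Sum>y3\<in>I3. Q x1 y3)
      + real (s * S * S * S) * (\<Sum>x1\<in>J1. \<Sum>x2\<in>J2. R x1 x2)"
  proof -
    have "(\<Sum>x1\<in>J1. \<Sum>x2\<in>J2. \<Sum>x3\<in>J3. \<Sum>y1\<in>I1. \<Sum>y2\<in>I2. \<Sum>y3\<in>I3. P y2 y3)
        = real (s * s * s * S) * (\<Sum>y2\<in>I2. \<Sum>y3\<in>I3. P y2 y3)"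
      using J cI by (simp add: mult.assoc)
    moreover have "(\<Sum>x1\<in>J1. \<Sum>x2\<in>J2. \<Sum>x3\<in>J3. \<Sum>y1\<in>I1. \<Sum>y2\<in>I2. \<Sum>y3\<in>I3. Q x1 y3)
        = real (s * s * S * S) * (\<Sum>x1\<in>J1. \<Sum>y3\<in>I3. Q x1 y3)"
      using J cI by (simp add: sum_distrib_left mult.assoc mult.left_commute)
    moreover have "(\<Sum>x1\<in>J1. \<Sum>x2\<in>J2. \<Sum>x3\<in>J3. \<Sum>y1\<in>I1. \<Sum>y2\<in>I2. \<Sum>y3\<in>I3. R x1 x2)
        = real (s * S * S * S) * (\<Sum>x1\<in>J1. \<Sum>x2\<in>J2. R x1 x2)"
      using J cI by (simp add: sum_distrib_left mult.assoc mult.left_commute)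
    ultimately show ?thesis
      by (simp only: sum.distrib)
  qed
  also have "(\<Sum>y2\<in>I2. \<Sum>y3\<in>I3. P y2 y3)
      = (\<Sum>t\<in>I1. \<Sum>y2\<in>I2. \<Sum>y3\<in>I3. norm (f (t+1) y2 y3 - f t y2 y3))"
    unfolding P_def by (subst sum.swap, rule sum.cong[OF refl], rule sum.swap)
  also have "(\<Sum>x1\<in>J1. \<Sum>y3\<in>I3. Q x1 y3)
      = (\<Sum>x1\<in>J1. \<Sum>t\<in>I2. \<Sum>y3\<in>I3. norm (f x1 (t+1) y3 - f x1 t y3))"
    unfolding Q_def by (rule sum.cong[OF refl], rule sum.swap)
  finally show ?thesis
    unfolding R_def .
qed

lemma two_scale_coefficient:
  fixes s S :: real
  assumes "s > 0" "S > 0"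
  shows "(s * s * s * S * (S * sqrt S) + s * s * S * S * (sqrt s * S) + s * S * S * S * (s * sqrt S))
      / ((s * s * s) * (S * S * S)) = 1 / sqrt S + 1 / sqrt s + sqrt S / s"
proof -
  have "sqrt S * sqrt S = S" "sqrt s * sqrt s = s" "sqrt S > 0" "sqrt s > 0"
    using assms by auto
  then show ?thesis
    using assms by (simp add: field_simps)
qed

lemma norm_grid_mean_diff_le:
  fixes f :: gridfun
  assumes J: "J1 \<subseteq> {b1..<b1+S}" "J2 \<subseteq> {b2..<b2+S}" "J3 \<subseteq> {b3..<b3+S}"
    and cJ: "card J1 = s" "card J2 = s" "card J3 = s" and s: "s \<ge> 1"
    and b: "b1 \<ge> 1" "b2 \<ge> 1" "b3 \<ge> 1" "b1 + S \<le> N + 1" "b2 + S \<le> N + 1" "b3 + S \<le> N + 1"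
  shows "norm (grid_mean (J1\<times>J2\<times>J3) f - grid_mean ({b1..<b1+S}\<times>{b2..<b2+S}\<times>{b3..<b3+S}) f)
     \<le> (1 / sqrt S + 1 / sqrt s + sqrt S / s) * sqrt (diff_energy N f)"
proof -
  define I1 where "I1 = {b1..<b1+S}"
  define I2 where "I2 = {b2..<b2+S}"
  define I3 where "I3 = {b3..<b3+S}"
  define E where "E = sqrt (diff_energy N f)"
  have cI: "card I1 = S" "card I2 = S" "card I3 = S"
    by (simp_all add: I1_def I2_def I3_def)
  have Ss: "S \<ge> s"
    using card_mono[OF _ J(1)] cJ by auto
  have "finite J1" "finite J2" "finite J3"
    using cJ s by (auto intro!: card_ge_0_finite)
  then have fin: "finite (J1\<times>J2\<times>J3)" "finite (I1\<times>I2\<times>I3)"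
    by (simp_all add: I1_def I2_def I3_def)
  have ne: "J1\<times>J2\<times>J3 \<noteq> {}" "I1\<times>I2\<times>I3 \<noteq> {}"
    using cJ s Ss by (auto simp: I1_def I2_def I3_def)
  have box: "I1 \<times> I2 \<times> I3 \<subseteq> interior N"
    using b by (auto simp: I1_def I2_def I3_def interior_def)
  then have boxJ: "J1 \<times> I2 \<times> I3 \<subseteq> interior N" "J1 \<times> J2 \<times> I3 \<subseteq> interior N"
    using J by (auto simp: I1_def I2_def I3_def)
  have "sqrt (real S * real S * real S) = S * sqrt S" "sqrt (real s * real S * real S) = sqrt s * S"
      "sqrt (real s * real s * real S) = s * sqrt S"
    by (simp_all add: real_sqrt_mult)
  then have "(\<Sum>t\<in>I1. \<Sum>y2\<in>I2. \<Sum>y3\<in>I3. norm (f (t+1) y2 y3 - f t y2 y3)) \<le> (S * sqrt S) * E"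
      "(\<Sum>x1\<in>J1. \<Sum>t\<in>I2. \<Sum>y3\<in>I3. norm (f x1 (t+1) y3 - f x1 t y3)) \<le> (sqrt s * S) * E"
      "(\<Sum>x1\<in>J1. \<Sum>x2\<in>J2. \<Sum>t\<in>I3. norm (f x1 x2 (t+1) - f x1 x2 t)) \<le> (s * sqrt S) * E"
    using sum_box_steps_le_sqrt_diff_energy(1)[OF box, of f] sum_box_steps_le_sqrt_diff_energy(2)[OF boxJ(1), of f]
      sum_box_steps_le_sqrt_diff_energy(3)[OF boxJ(2), of f] cI cJ
    by (simp_all add: E_def)
  then have pairs: "(\<Sum>(x1,x2,x3)\<in>J1\<times>J2\<times>J3. \<Sum>(y1,y2,y3)\<in>I1\<times>I2\<times>I3. norm (f x1 x2 x3 - f y1 y2 y3))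
      \<le> (s * s * s * S * (S * sqrt S) + s * s * S * S * (sqrt s * S) + s * S * S * S * (s * sqrt S)) * E"
    using sum_pairs_norm_diff_le_axis_sums[where f=f, OF I1_def I2_def I3_def J[folded I1_def I2_def I3_def] cJ]
    by (simp only: of_nat_mult distrib_right mult.assoc)
      (smt (verit, best) mult_left_mono of_nat_0_le_iff zero_le_mult_iff)
  have "norm (grid_mean (J1\<times>J2\<times>J3) f - grid_mean (I1\<times>I2\<times>I3) f)
      \<le> (\<Sum>(x1,x2,x3)\<in>J1\<times>J2\<times>J3. \<Sum>(y1,y2,y3)\<in>I1\<times>I2\<times>I3. norm (f x1 x2 x3 - f y1 y2 y3))
        / ((s * s * s) * (S * S * S))"
    using norm_mean_diff_le[OF fin ne, of "\<lambda>(i,j,l). f i j l"] cI cJ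
    by (simp add: grid_mean_def card_cartesian_product case_prod_beta)
  also have "\<dots> \<le> (s * s * s * S * (S * sqrt S) + s * s * S * S * (sqrt s * S) + s * S * S * S * (s * sqrt S)) * E
        / ((s * s * s) * (S * S * S))"
    using pairs by (rule divide_right_mono) simp
  also have "\<dots> = (1 / sqrt S + 1 / sqrt s + sqrt S / s) * E"
    using two_scale_coefficient[of s S] s Ss by (simp add: times_divide_eq_left[symmetric])
  finally show ?thesis
    by (simp add: I1_def I2_def I3_def E_def)
qed

lemma norm_grid_mean_le:
  fixes f :: gridfun
  assumes "b1 \<ge> 1" "b2 \<ge> 1" "b3 \<ge> 1" "b1 + S \<le> N + 1" "b2 + S \<le> N + 1" "b3 + S \<le> N + 1" "S \<ge> 1"
  shows "norm (grid_mean ({b1..<b1+S}\<times>{b2..<b2+S}\<times>{b3..<b3+S}) f)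
    \<le> sqrt (\<Sum>(i,j,l)\<in>interior N. (norm (f i j l))^2) / (S * sqrt S)"
proof -
  define B where "B = {b1..<b1+S}\<times>{b2..<b2+S}\<times>{b3..<b3+S}"
  define F where "F = (\<lambda>(i,j,l). f i j l)"
  have cB: "sqrt (card B) = S * sqrt S" "card B = (S * sqrt S)^2"
    by (simp_all add: B_def card_cartesian_product real_sqrt_mult power2_eq_square)
  have "norm (grid_mean B f) = norm (sum F B) / real (card B)"
    by (simp add: grid_mean_def F_def divide_inverse mult.commute)
  also have "\<dots> \<le> (\<Sum>p\<in>B. norm (F p)) / real (card B)"
    by (intro divide_right_mono norm_sum) simp
  also have "\<dots> \<le> sqrt (card B) * sqrt (\<Sum>p\<in>interior N. (norm (F p))^2) / real (card B)"
    by (intro divide_right_mono sum_le_sqrt_card_mult_sqrt_sum_squares)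
      (use assms in \<open>auto simp: B_def interior_def\<close>)
  also have "\<dots> = sqrt (\<Sum>(i,j,l)\<in>interior N. (norm (f i j l))^2) / (S * sqrt S)"
    using assms unfolding cB by (simp add: F_def case_prod_beta power2_eq_square)
  finally show ?thesis
    by (simp add: B_def)
qed

lemma grid_mean_singleton: "grid_mean {(i,j,l)} f = f i j l"
  by (simp add: grid_mean_def)

text \<open>A discrete substitute for the embedding of \<open>H\<^sup>1\<close> into \<open>L\<^sup>\<infinity>\<close>, which fails in three
  dimensions: \<open>f p\<close> is compared with its mean over a box of side \<open>s\<close> containing \<open>p\<close>, that mean
  with the mean over a box of side \<open>S\<close>, and the latter is bounded by the \<open>L\<^sup>2\<close> norm.\<close>

lemma norm_le_two_scale_bound:
  fixes f :: gridfun and s S :: nat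
  assumes p: "(i,j,l) \<in> interior N" and s: "1 \<le> s" "s \<le> S" "S \<le> N"
  shows "norm (f i j l) \<le> (4 + sqrt s + sqrt S / s) * sqrt (diff_energy N f)
     + sqrt (\<Sum>(i,j,l)\<in>interior N. (norm (f i j l))^2) / (S * sqrt S)"
proof -
  define small where "small = {min i (N+1-s)..<min i (N+1-s)+s}
      \<times> {min j (N+1-s)..<min j (N+1-s)+s} \<times> {min l (N+1-s)..<min l (N+1-s)+s}"
  define large where "large = {min i (N+1-S)..<min i (N+1-S)+S}
      \<times> {min j (N+1-S)..<min j (N+1-S)+S} \<times> {min l (N+1-S)..<min l (N+1-S)+S}"
  have pi: "1 \<le> i" "i \<le> N" "1 \<le> j" "j \<le> N" "1 \<le> l" "l \<le> N"
    using p by (auto simp: interior_def)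
  have "norm (grid_mean ({i}\<times>{j}\<times>{l}) f - grid_mean small f)
      \<le> (1 / sqrt s + 1 / sqrt (real (1::nat)) + sqrt s / real (1::nat)) * sqrt (diff_energy N f)"
    unfolding small_def by (rule norm_grid_mean_diff_le) (use pi s in auto)
  then have "norm (f i j l - grid_mean small f)
      \<le> (1 / sqrt s + 1 + sqrt s) * sqrt (diff_energy N f)"
    by (simp add: grid_mean_singleton)
  moreover have "norm (grid_mean small f - grid_mean large f)
      \<le> (1 / sqrt S + 1 / sqrt s + sqrt S / s) * sqrt (diff_energy N f)"
    unfolding small_def large_def by (rule norm_grid_mean_diff_le) (use pi s in auto)
  moreover have "norm (grid_mean large f)
      \<le> sqrt (\<Sum>(i,j,l)\<in>interior N. (norm (f i j l))^2) / (S * sqrt S)"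
    unfolding large_def by (rule norm_grid_mean_le) (use pi s in auto)
  moreover have "norm (f i j l) \<le> norm (f i j l - grid_mean small f)
      + norm (grid_mean small f - grid_mean large f) + norm (grid_mean large f)"
    using norm_triangle_ineq[of "f i j l - grid_mean small f" "grid_mean small f - grid_mean large f"]
      norm_triangle_ineq[of "f i j l - grid_mean large f" "grid_mean large f"]
    by simp
  moreover have "(1 / sqrt s + 1 + sqrt s) + (1 / sqrt S + 1 / sqrt s + sqrt S / s)
      \<le> 4 + sqrt s + sqrt S / s"
  proof -
    have "1 / sqrt s \<le> 1" "1 / sqrt S \<le> 1"
      using s by auto
    then show ?thesis
      by linarith
  qed
  then have "(1 / sqrt s + 1 + sqrt s) * sqrt (diff_energy N f)
      + (1 / sqrt S + 1 / sqrt s + sqrt S / s) * sqrt (diff_energy N f)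
      \<le> (4 + sqrt s + sqrt S / s) * sqrt (diff_energy N f)"
    by (simp only: distrib_right[symmetric] mult_right_mono real_sqrt_ge_zero diff_energy_nonneg)
  ultimately show ?thesis
    by linarith
qed

lemma sqrt_sum_norm_squared_eq_norm2:
  assumes "N \<ge> 1"
  shows "sqrt (\<Sum>(i,j,l)\<in>interior N. (norm (f i j l))^2) = real N * sqrt N * norm2 N f"
proof -
  have "(\<Sum>(i,j,l)\<in>interior N. (norm (f i j l))^2) = real N ^ 3 * (norm2 N f)^2"
    unfolding norm2_squared ginner_self using assms by (simp add: field_simps)
  then show ?thesis
    using norm2_nonneg by (simp add: real_sqrt_mult power3_eq_cube)
qed

lemma sqrt_diff_energy_eq_gradnorm2:
  assumes "N \<ge> 1"
  shows "sqrt (diff_energy N f) = sqrt N * gradnorm2 N f"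
proof -
  have "norm (Dx N f i j l) = real N * norm (f (i+1) j l - f i j l)"
    "norm (Dy N f i j l) = real N * norm (f i (j+1) l - f i j l)"
    "norm (Dz N f i j l) = real N * norm (f i j (l+1) - f i j l)" for i j l
    unfolding Dx_def Dy_def Dz_def meshsize_def by simp_all
  then have "(\<Sum>(i,j,l)\<in>interior N. (norm (Dx N f i j l))^2 + (norm (Dy N f i j l))^2
      + (norm (Dz N f i j l))^2) = (real N)^2 * diff_energy N f"
    unfolding diff_energy_def by (simp add: sum_distrib_left case_prod_beta power_mult_distrib algebra_simps)
  then have "(gradnorm2 N f)^2 = diff_energy N f / real N"
    unfolding gradnorm2_def meshsize_def using assms diff_energy_nonneg[of N f]
    by (simp add: field_simps power2_eq_square power3_eq_cube)
  then have "diff_energy N f = real N * (gradnorm2 N f)^2"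
    using assms by (simp add: field_simps)
  then show ?thesis
    using gradnorm2_nonneg[of N f] by (simp add: real_sqrt_mult)
qed

lemma norm_le_gradnorm2_norm2:
  fixes f :: gridfun and m :: nat
  assumes "N \<ge> 1" "(i,j,l) \<in> interior N" "m \<ge> 1" "m^6 \<le> N"
  shows "norm (f i j l)
    \<le> (4 + 2 * real m) * (sqrt N * gradnorm2 N f) + real N * sqrt N * norm2 N f / real m ^ 9"
proof -
  have "m^2 \<le> m^6"
    using assms by (simp add: power_increasing)
  then have "norm (f i j l) \<le> (4 + sqrt (m^2) + sqrt (m^6) / (m^2)) * sqrt (diff_energy N f)
      + sqrt (\<Sum>(i,j,l)\<in>interior N. (norm (f i j l))^2) / (m^6 * sqrt (m^6))"
    using norm_le_two_scale_bound[OF assms(2), of "m^2" "m^6"] assms by simp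
  moreover have "sqrt (real m ^ 6) = real m ^ 3"
    using real_sqrt_abs[of "real m ^ 3"] by (simp flip: power_mult)
  then have "4 + sqrt (m^2) + sqrt (m^6) / (m^2) = 4 + 2 * real m" "m^6 * sqrt (m^6) = real m ^ 9"
    using assms by (simp_all add: power_eq_if)
  ultimately show ?thesis
    using assms by (simp add: sqrt_diff_energy_eq_gradnorm2 sqrt_sum_norm_squared_eq_norm2 add.commute)
qed

section \<open>Normalization errors\<close>

lemma mult_le_weighted_squares:
  fixes a b K C E :: real
  assumes "a > 0" "K^2 \<le> 4 * a * b"
  shows "K * C * E \<le> a * C^2 + b * E^2"
proof -
  have "4 * a * (a * C^2 + b * E^2 - K * C * E) = (2 * a * C - K * E)^2 + (4 * a * b - K^2) * E^2"
    by (simp add: algebra_simps power2_eq_square)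
  also have "\<dots> \<ge> 0"
    using assms by simp
  finally show ?thesis
    using assms by (simp add: zero_le_mult_iff)
qed

lemma norm_normalize_errors_le:
  fixes u v :: "'a::real_normed_vector"
  assumes "norm u = 1" "norm (u - v) \<le> \<eta>"
  shows "norm (v /\<^sub>R norm v - v) \<le> \<eta>" "norm (u - v /\<^sub>R norm v) \<le> 2 * \<eta>"
proof -
  have "v /\<^sub>R norm v - v = (1 - norm v) *\<^sub>R (v /\<^sub>R norm v)"
    by (cases "v = 0") (simp_all add: algebra_simps)
  then have "norm (v /\<^sub>R norm v - v) = \<bar>1 - norm v\<bar> * norm (v /\<^sub>R norm v)"
    by (simp only: norm_scaleR)
  also have "\<dots> \<le> \<eta> * 1"
  proof (rule mult_mono)
    show "\<bar>1 - norm v\<bar> \<le> \<eta>"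
      using norm_triangle_ineq3[of u v] assms by simp
    show "norm (v /\<^sub>R norm v) \<le> 1"
      by (cases "v = 0") simp_all
  qed (use order_trans[OF norm_ge_zero assms(2)] in simp_all)
  finally show v: "norm (v /\<^sub>R norm v - v) \<le> \<eta>"
    by simp
  show "norm (u - v /\<^sub>R norm v) \<le> 2 * \<eta>"
    using norm_triangle_ineq[of "u - v" "v - v /\<^sub>R norm v"] assms(2) v
    by (simp add: norm_minus_commute)
qed

text \<open>For unit vectors the error \<open>e = u\<^sub>2 - m\<^sub>2\<close> is almost orthogonal to \<open>m\<^sub>2\<close>:
  \<open>m\<^sub>2 \<bullet> e = -\<parallel>e\<parallel>\<^sup>2/2\<close>.\<close>

lemma abs_inner_unit_error_le:
  fixes m1 m2 u2 :: "'a::real_inner"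
  assumes "norm m2 = 1" "norm u2 = 1"
  shows "\<bar>m1 \<bullet> (u2 - m2)\<bar> \<le> (norm (u2 - m2) / 2 + norm (m1 - m2)) * norm (u2 - m2)"
proof -
  define e where "e = u2 - m2"
  have "(norm e)^2 = 2 - 2 * (u2 \<bullet> m2)"
    using assms by (simp add: e_def power2_norm_eq_inner algebra_simps inner_commute norm_eq_1)
  moreover have "m2 \<bullet> e = m2 \<bullet> u2 - 1"
    using assms by (simp add: e_def inner_diff_right norm_eq_1)
  ultimately have "m2 \<bullet> e = -((norm e)^2 / 2)"
    by (simp add: inner_commute field_simps)
  moreover have "m1 \<bullet> e = m2 \<bullet> e + (m1 - m2) \<bullet> e"
    by (simp add: inner_diff_left)
  ultimately have "\<bar>m1 \<bullet> e\<bar> \<le> (norm e)^2 / 2 + norm (m1 - m2) * norm e"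
    using Cauchy_Schwarz_ineq2[of "m1 - m2" e] zero_le_power2[of "norm e"]
    unfolding abs_le_iff by linarith
  then show ?thesis
    by (simp add: e_def power2_eq_square algebra_simps)
qed

lemma abs_inner_normalization_errors_le:
  fixes u1 u2 v1 v2 :: "'a::real_inner"
  assumes u: "norm u1 = 1" "norm u2 = 1"
    and v: "norm (u1 - v1) \<le> \<eta>" "norm (u2 - v2) \<le> \<eta>" "\<eta> \<le> 1/2"
    and r: "norm (u1 - u2) \<le> \<rho>" "5 * \<eta> + \<rho> \<le> K" and ab: "a > 0" "K^2 \<le> 4 * a * b"
  shows "\<bar>(v1 /\<^sub>R norm v1 - v1) \<bullet> (u2 - v2 /\<^sub>R norm v2)\<bar>
    \<le> a * (norm (v1 /\<^sub>R norm v1 - v1))^2 + b * (norm (u2 - v2 /\<^sub>R norm v2))^2"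
proof -
  define m1 where "m1 = v1 /\<^sub>R norm v1"
  define m2 where "m2 = v2 /\<^sub>R norm v2"
  define e where "e = u2 - m2"
  have "norm v1 > 0" "norm v2 > 0"
    using norm_triangle_ineq3[of u1 v1] norm_triangle_ineq3[of u2 v2] u v by auto
  then have m: "norm m1 = 1" "norm m2 = 1"
    by (simp_all add: m1_def m2_def)
  have d: "m1 - v1 = (1 - norm v1) *\<^sub>R m1"
    using \<open>norm v1 > 0\<close> by (simp add: m1_def algebra_simps)
  have "norm (m1 - v1) \<le> \<eta>" "norm (u1 - m1) \<le> 2 * \<eta>" "norm e \<le> 2 * \<eta>"
    using norm_normalize_errors_le[OF u(1) v(1)] norm_normalize_errors_le[OF u(2) v(2)]
    by (simp_all add: m1_def m2_def e_def)
  moreover have "norm (m1 - m2) \<le> norm (m1 - u1) + norm (u1 - u2) + norm (u2 - m2)"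
    using norm_triangle_ineq[of "m1 - u1" "u1 - u2"] norm_triangle_ineq[of "m1 - u2" "u2 - m2"] by simp
  ultimately have "norm e / 2 + norm (m1 - m2) \<le> K"
    using r by (simp add: e_def norm_minus_commute)
  then have "\<bar>m1 \<bullet> e\<bar> \<le> K * norm e"
    using order_trans[OF abs_inner_unit_error_le[OF m(2) u(2), of m1] mult_right_mono]
    by (simp add: e_def)
  then have "\<bar>(m1 - v1) \<bullet> e\<bar> \<le> norm (m1 - v1) * (K * norm e)"
    unfolding d using m(1) by (simp add: abs_mult mult_left_mono)
  also have "\<dots> = K * norm (m1 - v1) * norm e"
    by simp
  also have "\<dots> \<le> a * (norm (m1 - v1))^2 + b * (norm e)^2"
    by (rule mult_le_weighted_squares[OF ab])
  finally show ?thesis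
    by (simp add: m1_def m2_def e_def)
qed

lemma abs_ginner_le_of_pointwise:
  assumes "\<And>i j l. (i,j,l) \<in> interior N \<Longrightarrow>
    \<bar>f i j l \<bullet> g i j l\<bar> \<le> a * (norm (f i j l))^2 + b * (norm (g i j l))^2"
  shows "\<bar>ginner N f g\<bar> \<le> a * (norm2 N f)^2 + b * (norm2 N g)^2"
proof -
  have "\<bar>ginner N f g\<bar> \<le> (1 / real N)^3 * (\<Sum>(i,j,l)\<in>interior N. \<bar>f i j l \<bullet> g i j l\<bar>)"
    unfolding ginner_def meshsize_def
    by (auto simp: abs_mult case_prod_beta intro!: mult_left_mono order_trans[OF sum_abs])
  also have "\<dots> \<le> (1 / real N)^3 * (\<Sum>(i,j,l)\<in>interior N. a * (norm (f i j l))^2 + b * (norm (g i j l))^2)"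
    using assms by (intro mult_left_mono sum_mono) auto
  also have "\<dots> = a * ginner N f f + b * ginner N g g"
    unfolding ginner_self by (simp add: sum.distrib sum_distrib_left case_prod_beta algebra_simps)
  finally show ?thesis
    by (simp add: norm2_squared)
qed

lemma abs_inner_normalization_errors_le_powr:
  fixes u1 u2 v1 v2 :: "'a::real_inner" and k :: real
  assumes k: "0 < k" "k \<le> 1" and u: "norm u1 = 1" "norm u2 = 1"
    and v: "norm (u1 - v1) \<le> k powr (3/4) / 5" "norm (u2 - v2) \<le> k powr (3/4) / 5"
    and r: "norm (u1 - u2) \<le> k powr (7/8) / 4"
  shows "\<bar>(v1 /\<^sub>R norm v1 - v1) \<bullet> (u2 - v2 /\<^sub>R norm v2)\<bar>
    \<le> k powr (1/4) * (norm (v1 /\<^sub>R norm v1 - v1))^2 + k powr (5/4) * (norm (u2 - v2 /\<^sub>R norm v2))^2"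
proof (rule abs_inner_normalization_errors_le[OF u v _ r])
  show "k powr (3/4) / 5 \<le> 1/2"
    using powr_le1[of "3/4" k] k by simp
  have "k powr (7/8) \<le> k powr (3/4)"
    using k by (intro powr_mono') simp_all
  then show "5 * (k powr (3/4) / 5) + k powr (7/8) / 4 \<le> 2 * k powr (3/4)"
    using powr_ge_zero[of k "3/4"] by linarith
  show "k powr (1/4) > 0" "(2 * k powr (3/4))^2 \<le> 4 * k powr (1/4) * k powr (5/4)"
    using k by (simp_all add: power2_eq_square flip: powr_add)
qed

lemma abs_ginner_normalization_errors_le:
  fixes mu1 mu2 mt1 mt2 :: gridfun and k :: real
  assumes k: "0 < k" "k \<le> 1"
    and u: "\<And>i j l. (i,j,l) \<in> interior N \<Longrightarrow> norm (mu1 i j l) = 1 \<and> norm (mu2 i j l) = 1"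
    and v: "\<And>i j l. (i,j,l) \<in> interior N \<Longrightarrow>
      norm (mu1 i j l - mt1 i j l) \<le> k powr (3/4) / 5 \<and> norm (mu2 i j l - mt2 i j l) \<le> k powr (3/4) / 5"
    and r: "norminf N (mu1 - mu2) \<le> k powr (7/8) / 4"
  shows "\<bar>ginner N ((mu1 - mt1) - (mu1 - normalize mt1)) (mu2 - normalize mt2)\<bar>
    \<le> k powr (5/4) * (norm2 N (mu2 - normalize mt2))^2
      + k powr (1/4) * (norm2 N ((mu1 - mt1) - (mu1 - normalize mt1)))^2"
proof -
  have "\<bar>(mt1 i j l /\<^sub>R norm (mt1 i j l) - mt1 i j l) \<bullet> (mu2 i j l - mt2 i j l /\<^sub>R norm (mt2 i j l))\<bar>
      \<le> k powr (1/4) * (norm (mt1 i j l /\<^sub>R norm (mt1 i j l) - mt1 i j l))^2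
        + k powr (5/4) * (norm (mu2 i j l - mt2 i j l /\<^sub>R norm (mt2 i j l)))^2"
    if p: "(i,j,l) \<in> interior N" for i j l
    by (rule abs_inner_normalization_errors_le_powr[OF k])
      (use u[OF p] v[OF p] order_trans[OF le_norminf[OF p, of "mu1 - mu2"] r] in simp_all)
  then show ?thesis
    by (subst add.commute, intro abs_ginner_le_of_pointwise) (simp add: normalize_def)
qed

section \<open>Smallness of the pointwise errors\<close>

lemma sqrt_le_power8:
  fixes n c x :: real
  assumes "0 < c" "0 < x" "n \<le> (c / x)^16"
  shows "sqrt n \<le> (c / x)^8"
proof -
  have "sqrt n \<le> sqrt (((c / x)^8)^2)"
    using assms(3) unfolding power_mult[symmetric] by simp
  also have "\<dots> = (c / x)^8"
    using assms(1,2) by (simp only: real_sqrt_abs) simp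
  finally show ?thesis .
qed

lemma gradient_term_le:
  fixes x c1 c2 m n G :: real
  assumes x: "x > 0" and c: "c1 > 0" "c2 > 0" and m: "1 \<le> m" "m \<le> c1 / x"
    and n: "0 \<le> n" "n \<le> (c2 / x)^16" and G: "0 \<le> G" "G \<le> x^22 / 2"
  shows "(4 + 2 * m) * (sqrt n * G) \<le> 3 * c1 * c2^8 * x^13"
proof -
  have "(4 + 2 * m) * (sqrt n * G) \<le> (6 * (c1 / x)) * ((c2 / x)^8 * (x^22 / 2))"
  proof (rule mult_mono)
    show "sqrt n * G \<le> (c2 / x)^8 * (x^22 / 2)"
      using sqrt_le_power8[OF c(2) x n(2)] G c x by (intro mult_mono) auto
  qed (use m n G in auto)
  also have "\<dots> = 3 * c1 * c2^8 * x^13"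
    using x power_add[of x 1 21] by (simp add: field_simps power_divide)
  finally show ?thesis .
qed

lemma l2_term_le:
  fixes x c1 c2 m n L :: real
  assumes x: "x > 0" and c: "c1 > 0" "c2 > 0" and m: "c1 / (2 * x) \<le> m"
    and n: "0 \<le> n" "n \<le> (c2 / x)^16" and L: "0 \<le> L" "L \<le> 2 * x^30"
  shows "n * sqrt n * L / m^9 \<le> 1024 * c2^24 / c1^9 * x^15"
proof -
  have "0 < c1 / (2 * x)"
    using x c by simp
  then have m0: "0 < m"
    using m by linarith
  have "(c1 / (2 * x))^9 \<le> m^9"
    using m \<open>0 < c1 / (2 * x)\<close> by (intro power_mono) auto
  then have "1 / m^9 \<le> 1 / (c1 / (2 * x))^9"
    using \<open>0 < c1 / (2 * x)\<close> m by (intro divide_left_mono) auto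
  then have inv_m: "1 / m^9 \<le> (2 * x / c1)^9"
    by (simp add: power_divide)
  have num: "n * sqrt n * L \<le> ((c2 / x)^16 * (c2 / x)^8) * (2 * x^30)"
    using n sqrt_le_power8[OF c(2) x n(2)] L by (intro mult_mono) simp_all
  have "n * sqrt n * L * (1 / m^9) \<le> ((c2 / x)^16 * (c2 / x)^8) * (2 * x^30) * (2 * x / c1)^9"
    using m0 by (intro mult_mono[OF num inv_m]) (simp_all add: c x)
  then have "n * sqrt n * L / m^9 \<le> ((c2 / x)^16 * (c2 / x)^8) * (2 * x^30) * (2 * x / c1)^9"
    by simp
  also have "\<dots> = 1024 * c2^24 / c1^9 * x^15"
    using x c power_add[of x 24 15] power_add[of "c2 / x" 16 8]
    by (simp add: field_simps power_divide power_mult_distrib)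
  finally show ?thesis .
qed

lemma real_nat_floor_divide_bounds:
  fixes c x :: real
  assumes "0 < x" "x \<le> c"
  shows "1 \<le> real (nat \<lfloor>c / x\<rfloor>)" "real (nat \<lfloor>c / x\<rfloor>) \<le> c / x"
    "c / (2 * x) \<le> real (nat \<lfloor>c / x\<rfloor>)"
proof -
  have "1 \<le> c / x"
    using assms by simp
  then show "1 \<le> real (nat \<lfloor>c / x\<rfloor>)" "real (nat \<lfloor>c / x\<rfloor>) \<le> c / x"
    by simp_all
  have "c / x < real (nat \<lfloor>c / x\<rfloor>) + 1"
    using \<open>1 \<le> c / x\<close> by linarith
  with \<open>1 \<le> real (nat \<lfloor>c / x\<rfloor>)\<close> have "c / x \<le> 2 * real (nat \<lfloor>c / x\<rfloor>)"
    by linarith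
  then show "c / (2 * x) \<le> real (nat \<lfloor>c / x\<rfloor>)"
    using assms by (simp add: field_simps)
qed

lemma power_powr_divide:
  fixes x :: real
  assumes "x > 0" "d > 0"
  shows "(x^d) powr (real n / real d) = x^n"
  using assms by (simp add: powr_realpow[symmetric] powr_powr)

text \<open>Writing \<open>k = x\<^sup>1\<^sup>6\<close> makes all exponents integral; with \<open>m \<approx> c\<^sub>1/x\<close> the two terms of
  norm_le_gradnorm2_norm2 become \<open>O(x\<^sup>1\<^sup>3)\<close> and \<open>O(x\<^sup>1\<^sup>5)\<close>, both small compared with \<open>x\<^sup>1\<^sup>2 = k\<^sup>3\<^sup>/\<^sup>4\<close>.\<close>

lemma norm_le_of_scaled_bounds:
  fixes f :: gridfun and x c1 c2 :: real
  assumes x: "0 < x" "x \<le> 1" "x \<le> c1" and c: "c1 > 0" "c2 > 0"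
    and small: "x * (3 * c1 * c2^8 + 1024 * c2^24 / c1^9) \<le> 1/5"
    and N: "N \<ge> 1" "(c1 / x)^16 \<le> real N" "real N \<le> (c2 / x)^16"
    and f: "norm2 N f \<le> 2 * x^30" "gradnorm2 N f \<le> x^22 / 2" and p: "(i,j,l) \<in> interior N"
  shows "norm (f i j l) \<le> x^12 / 5"
proof -
  define m where "m = nat \<lfloor>c1 / x\<rfloor>"
  note m = real_nat_floor_divide_bounds[OF x(1,3), folded m_def]
  have "real m ^ 6 \<le> real m ^ 16"
    using m by (intro power_increasing) auto
  also have "\<dots> \<le> (c1 / x)^16"
    using m by (intro power_mono) auto
  finally have "real m ^ 6 \<le> (c1 / x)^16" .
  then have "m^6 \<le> N"
    using N by (simp flip: of_nat_power)
  then have "norm (f i j l)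
      \<le> (4 + 2 * real m) * (sqrt N * gradnorm2 N f) + real N * sqrt N * norm2 N f / real m ^ 9"
    using norm_le_gradnorm2_norm2[OF N(1) p] m by simp
  also have "\<dots> \<le> 3 * c1 * c2^8 * x^13 + 1024 * c2^24 / c1^9 * x^15"
    using gradient_term_le[OF x(1) c m(1,2) _ N(3) gradnorm2_nonneg f(2)]
      l2_term_le[OF x(1) c m(3) _ N(3) norm2_nonneg f(1)] by simp
  also have "\<dots> \<le> 3 * c1 * c2^8 * x^13 + 1024 * c2^24 / c1^9 * x^13"
    using x c by (intro add_left_mono mult_left_mono power_decreasing) simp_all
  also have "\<dots> = x^12 * (x * (3 * c1 * c2^8 + 1024 * c2^24 / c1^9))"
    using power_add[of x 12 1] by (simp add: algebra_simps)
  also have "\<dots> \<le> x^12 / 5"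
    using mult_left_mono[OF small, of "x^12"] x by simp
  finally show ?thesis .
qed

lemma grid_error_pointwise_small:
  fixes C1 C2 :: real
  assumes "C1 > 0" "C2 > 0"
  obtains \<epsilon> :: real where "\<epsilon> > 0"
    "\<And>N k f i j l. N \<ge> 1 \<Longrightarrow> k < \<epsilon> \<Longrightarrow> C1 * meshsize N \<le> k \<Longrightarrow> k \<le> C2 * meshsize N \<Longrightarrow>
      norm2 N f \<le> 2 * k powr (15/8) \<Longrightarrow> gradnorm2 N f \<le> 1/2 * k powr (11/8) \<Longrightarrow>
      (i,j,l) \<in> interior N \<Longrightarrow> norm (f i j l) \<le> k powr (3/4) / 5"
proof -
  define c1 where "c1 = root 16 C1"
  define c2 where "c2 = root 16 C2"
  have c: "c1 > 0" "c2 > 0" "c1^16 = C1" "c2^16 = C2"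
    using assms by (auto simp: c1_def c2_def real_root_pow_pos2)
  define K where "K = 3 * c1 * c2^8 + 1024 * c2^24 / c1^9"
  have "K > 0"
    unfolding K_def using c by (intro add_pos_pos mult_pos_pos divide_pos_pos) auto
  define \<delta> where "\<delta> = min 1 (min c1 (1 / (5 * K)))"
  have "\<delta> > 0"
    using c \<open>K > 0\<close> by (simp add: \<delta>_def)
  show ?thesis
  proof (rule that)
    show "\<delta>^16 > 0"
      using \<open>\<delta> > 0\<close> by simp
  next
    fix N k and f :: gridfun and i j l
    assume N: "N \<ge> 1" and k: "k < \<delta>^16" "C1 * meshsize N \<le> k" "k \<le> C2 * meshsize N"
      and f: "norm2 N f \<le> 2 * k powr (15/8)" "gradnorm2 N f \<le> 1/2 * k powr (11/8)"
      and p: "(i,j,l) \<in> interior N"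
    have "0 < C1 * meshsize N"
      using N assms by (simp add: meshsize_def)
    then have "k > 0"
      using k(2) by linarith
    define x where "x = root 16 k"
    have x: "x > 0" "x^16 = k"
      using \<open>k > 0\<close> by (simp_all add: x_def real_root_pow_pos2)
    then have "x < \<delta>"
      using k(1) \<open>\<delta> > 0\<close> by (metis power_less_imp_less_base less_imp_le)
    then have "x \<le> 1" "x \<le> c1" "x * K \<le> 1/5"
      using \<open>K > 0\<close> by (simp_all add: \<delta>_def field_simps)
    moreover have "(c1 / x)^16 \<le> real N" "real N \<le> (c2 / x)^16"
      using k(2,3) c x N \<open>k > 0\<close> by (simp_all add: meshsize_def power_divide field_simps)
    moreover have "k powr (15/8) = x^30" "k powr (11/8) = x^22" "k powr (3/4) = x^12"
      using power_powr_divide[OF x(1), of 16 30] power_powr_divide[OF x(1), of 16 22]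
        power_powr_divide[OF x(1), of 16 12] x(2) by simp_all
    ultimately show "norm (f i j l) \<le> k powr (3/4) / 5"
      using norm_le_of_scaled_bounds[OF x(1) _ _ c(1,2) _ N _ _ _ _ p] f
      by (simp add: K_def)
  qed
qed

theorem mainTheorem4:
  fixes Cs C1 C2 :: real
  assumes "Cs > 0" "C1 > 0" "C2 > 0"
  shows "\<exists>\<epsilon>>0. \<forall>(N::nat) (k::real) (mu1::gridfun) mu2 mt1 mt2.
    N \<ge> 1 \<and> meshsize N < \<epsilon> \<and> k < \<epsilon> \<and>
    inX N mu1 \<and> inX N mu2 \<and> inX N mt1 \<and> inX N mt2 \<and>
    (\<forall>(i,j,l)\<in>allpts N. norm (mu1 i j l) = 1 \<and> norm (mu2 i j l) = 1) \<and>
    norminf N mu1 + gradnorminf N mu1 \<le> Cs \<and>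
    norminf N mu2 + gradnorminf N mu2 \<le> Cs \<and>
    C1 * meshsize N \<le> k \<and> k \<le> C2 * meshsize N \<and>
    norm2 N (mu1 - mt1) \<le> 2 * k powr (15/8) \<and>
    norm2 N (mu2 - mt2) \<le> 2 * k powr (15/8) \<and>
    gradnorm2 N (mu1 - mt1) \<le> 1/2 * k powr (11/8) \<and>
    gradnorm2 N (mu2 - mt2) \<le> 1/2 * k powr (11/8) \<and>
    norminf N (mu1 - mu2) \<le> 1/4 * k powr (7/8)
    \<longrightarrow>
    (let e1 = mu1 - normalize mt1; e2 = mu2 - normalize mt2; et1 = mu1 - mt1 in
      \<bar>ginner N (et1 - e1) e2\<bar> \<le> k powr (5/4) * (norm2 N e2)^2 + k powr (1/4) * (norm2 N (et1 - e1))^2)"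
proof -
  obtain \<epsilon> where "\<epsilon> > 0" and small: "\<And>N k f i j l. N \<ge> 1 \<Longrightarrow> k < \<epsilon> \<Longrightarrow>
      C1 * meshsize N \<le> k \<Longrightarrow> k \<le> C2 * meshsize N \<Longrightarrow>
      norm2 N f \<le> 2 * k powr (15/8) \<Longrightarrow> gradnorm2 N f \<le> 1/2 * k powr (11/8) \<Longrightarrow>
      (i,j,l) \<in> interior N \<Longrightarrow> norm (f i j l) \<le> k powr (3/4) / 5"
    using grid_error_pointwise_small[OF assms(2,3)] by blast
  show ?thesis
  proof (intro exI[of _ "min \<epsilon> 1"] conjI allI impI, goal_cases)
    case 1
    then show ?case
      using \<open>\<epsilon> > 0\<close> by simp
  next
    case (2 N k mu1 mu2 mt1 mt2)
    have "0 < C1 * meshsize N"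
      using 2 assms by (simp add: meshsize_def)
    with 2 have k: "0 < k" "k \<le> 1"
      by auto
    show ?case
      unfolding Let_def
    proof (rule abs_ginner_normalization_errors_le[OF k])
      show "norm (mu1 i j l) = 1 \<and> norm (mu2 i j l) = 1" if "(i,j,l) \<in> interior N" for i j l
        using that 2 by (auto simp: interior_def allpts_def)
      show "norm (mu1 i j l - mt1 i j l) \<le> k powr (3/4) / 5 \<and> norm (mu2 i j l - mt2 i j l) \<le> k powr (3/4) / 5"
        if "(i,j,l) \<in> interior N" for i j l
        using small[of N k "mu1 - mt1" i j l] small[of N k "mu2 - mt2" i j l] that 2 by auto
    qed (use 2 in simp)
  qed
qed

end
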